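(* Let $R$ be a unital ring and let $S$ be an inverse submonoid with zero of the multiplicative monoid of $R$. Suppose that (1) whenever $a,b\in S$ are orthogonal, $a+b\in S$; and (2) whenever $e\in S$ is an idempotent, $1-e\in S$. Then $S$ is a Boolean inverse monoid.
   Context: In an inverse semigroup with zero, $s,t$ are orthogonal if $s^{-1}t=0=st^{-1}$, and compatible if $s^{-1}t,st^{-1}$ are idempotents; the natural partial order is used. A Boolean inverse monoid is an inverse monoid with zero in which every pair of compatible elements has a join, multiplication distributes over these joins, and the idempotents form a Boolean algebra (a distributive lattice with bottom in which each principal order ideal is a unital Boolean algebra). *)

theory Defs
  imports Main
begin

definition inverse_monoid_zero :: "'a set \<Rightarrow> ('a \<Rightarrow> 'a \<Rightarrow> 'a) \<Rightarrow> 'a \<Rightarrow> 'a \<Rightarrow> bool" where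
  "inverse_monoid_zero C m u z \<longleftrightarrow>
     u \<in> C \<and> z \<in> C \<and>
     (\<forall>x\<in>C. \<forall>y\<in>C. m x y \<in> C) \<and>
     (\<forall>x\<in>C. \<forall>y\<in>C. \<forall>w\<in>C. m (m x y) w = m x (m y w)) \<and>
     (\<forall>x\<in>C. m u x = x \<and> m x u = x) \<and>
     (\<forall>x\<in>C. m z x = z \<and> m x z = z) \<and>
     (\<forall>x\<in>C. \<exists>!y. y \<in> C \<and> m (m x y) x = x \<and> m (m y x) y = y)"

definition sinv :: "'a set \<Rightarrow> ('a \<Rightarrow> 'a \<Rightarrow> 'a) \<Rightarrow> 'a \<Rightarrow> 'a" where
  "sinv C m x = (THE y. y \<in> C \<and> m (m x y) x = x \<and> m (m y x) y = y)"

definition idems :: "'a set \<Rightarrow> ('a \<Rightarrow> 'a \<Rightarrow> 'a) \<Rightarrow> 'a set" where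
  "idems C m = {e \<in> C. m e e = e}"

definition orthogonal :: "'a set \<Rightarrow> ('a \<Rightarrow> 'a \<Rightarrow> 'a) \<Rightarrow> 'a \<Rightarrow> 'a \<Rightarrow> 'a \<Rightarrow> bool" where
  "orthogonal C m z s t \<longleftrightarrow> m (sinv C m s) t = z \<and> m s (sinv C m t) = z"

definition compatible :: "'a set \<Rightarrow> ('a \<Rightarrow> 'a \<Rightarrow> 'a) \<Rightarrow> 'a \<Rightarrow> 'a \<Rightarrow> bool" where
  "compatible C m s t \<longleftrightarrow> m (sinv C m s) t \<in> idems C m \<and> m s (sinv C m t) \<in> idems C m"

definition natle :: "'a set \<Rightarrow> ('a \<Rightarrow> 'a \<Rightarrow> 'a) \<Rightarrow> 'a \<Rightarrow> 'a \<Rightarrow> bool" where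
  "natle C m s t \<longleftrightarrow> (\<exists>e\<in>idems C m. s = m t e)"

definition is_lub_in :: "'a set \<Rightarrow> ('a \<Rightarrow> 'a \<Rightarrow> 'a) \<Rightarrow> 'a set \<Rightarrow> 'a \<Rightarrow> 'a \<Rightarrow> 'a \<Rightarrow> bool" where
  "is_lub_in C m A x y j \<longleftrightarrow> j \<in> A \<and> natle C m x j \<and> natle C m y j \<and>
     (\<forall>w\<in>A. natle C m x w \<and> natle C m y w \<longrightarrow> natle C m j w)"

definition is_glb_in :: "'a set \<Rightarrow> ('a \<Rightarrow> 'a \<Rightarrow> 'a) \<Rightarrow> 'a set \<Rightarrow> 'a \<Rightarrow> 'a \<Rightarrow> 'a \<Rightarrow> bool" where
  "is_glb_in C m A x y j \<longleftrightarrow> j \<in> A \<and> natle C m j x \<and> natle C m j y \<and>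
     (\<forall>w\<in>A. natle C m w x \<and> natle C m w y \<longrightarrow> natle C m w j)"

text \<open>The idempotents form a Boolean algebra: a distributive lattice with bottom z
  in which every principal order ideal is a unital Boolean algebra.\<close>
definition idems_boolean :: "'a set \<Rightarrow> ('a \<Rightarrow> 'a \<Rightarrow> 'a) \<Rightarrow> 'a \<Rightarrow> bool" where
  "idems_boolean C m z \<longleftrightarrow>
     (let E = idems C m in
       (\<forall>e\<in>E. \<forall>f\<in>E. (\<exists>j. is_lub_in C m E e f j) \<and> (\<exists>k. is_glb_in C m E e f k)) \<and>
       (\<forall>e\<in>E. \<forall>f\<in>E. \<forall>g\<in>E. \<forall>j d k l.
           is_lub_in C m E f g j \<and> is_glb_in C m E e j d \<and>
           is_glb_in C m E e f k \<and> is_glb_in C m E e g l \<longrightarrow> is_lub_in C m E k l d) \<and>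
       z \<in> E \<and> (\<forall>e\<in>E. natle C m z e) \<and>
       (\<forall>e\<in>E. \<forall>f\<in>E. natle C m f e \<longrightarrow>
           (\<exists>g\<in>E. natle C m g e \<and> is_glb_in C m E f g z \<and> is_lub_in C m E f g e)))"

definition boolean_inverse_monoid :: "'a set \<Rightarrow> ('a \<Rightarrow> 'a \<Rightarrow> 'a) \<Rightarrow> 'a \<Rightarrow> 'a \<Rightarrow> bool" where
  "boolean_inverse_monoid C m u z \<longleftrightarrow>
     inverse_monoid_zero C m u z \<and>
     (\<forall>s\<in>C. \<forall>t\<in>C. compatible C m s t \<longrightarrow> (\<exists>j. is_lub_in C m C s t j)) \<and>
     (\<forall>a\<in>C. \<forall>s\<in>C. \<forall>t\<in>C. \<forall>j. compatible C m s t \<and> is_lub_in C m C s t j \<longrightarrow>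
         is_lub_in C m C (m a s) (m a t) (m a j) \<and> is_lub_in C m C (m s a) (m t a) (m j a)) \<and>
     idems_boolean C m z"

end

theory Submission
  imports Defs
begin

text \<open>Inside the ring, an orthogonal sum is a join, so compatible elements s, t get the join
  s + t (1 - s\<inverse>s): the summands are orthogonal, and using the compatibility identity
  t s\<inverse>s = s t\<inverse>t this equals s + t - s t\<inverse>t. Closure under 1 - e makes the
  idempotents a Boolean algebra with meet e f, join e + f - e f and relative complement e - f.
  Distributivity of multiplication over joins is then a computation with the explicit formula.\<close>

lemma is_lub_in_subset:
  assumes "A \<subseteq> B" "j \<in> A" "is_lub_in C m B x y j"
  shows "is_lub_in C m A x y j"
  using assms unfolding is_lub_in_def by blast

locale inverse_submonoid =
  fixes S :: "'a::{monoid_mult,zero} set"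
  assumes inverse_monoid_zero: "inverse_monoid_zero S (*) 1 0"
begin

abbreviation ginv :: "'a \<Rightarrow> 'a" where
  "ginv \<equiv> sinv S (*)"

lemma zero_mem: "0 \<in> S"
  using inverse_monoid_zero unfolding inverse_monoid_zero_def by auto

lemma mult_mem: "x \<in> S \<Longrightarrow> y \<in> S \<Longrightarrow> x * y \<in> S"
  using inverse_monoid_zero unfolding inverse_monoid_zero_def by auto

lemma ex1_ginv: "x \<in> S \<Longrightarrow> \<exists>!y. y \<in> S \<and> x * y * x = x \<and> y * x * y = y"
  using inverse_monoid_zero unfolding inverse_monoid_zero_def by auto

lemma
  assumes "x \<in> S"
  shows ginv_mem: "ginv x \<in> S"
    and mult_ginv_mult: "x * (ginv x * x) = x"
    and ginv_mult_ginv: "ginv x * (x * ginv x) = ginv x"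
proof -
  have "ginv x \<in> S \<and> x * ginv x * x = x \<and> ginv x * x * ginv x = ginv x"
    unfolding sinv_def using ex1_ginv[OF assms] by (rule theI')
  then show "ginv x \<in> S" "x * (ginv x * x) = x" "ginv x * (x * ginv x) = ginv x"
    by (auto simp: mult.assoc)
qed

lemma mult_ginv_mult_left: "x \<in> S \<Longrightarrow> x * (ginv x * (x * z)) = x * z"
  by (metis mult_ginv_mult mult.assoc)

lemma ginv_mult_ginv_left: "x \<in> S \<Longrightarrow> ginv x * (x * (ginv x * z)) = ginv x * z"
  by (metis ginv_mult_ginv mult.assoc)

lemma ginv_eqI:
  assumes "x \<in> S" "y \<in> S" "x * (y * x) = x" "y * (x * y) = y"
  shows "ginv x = y"
  unfolding sinv_def using ex1_ginv[OF assms(1)]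
  by (rule the1_equality) (use assms in \<open>auto simp: mult.assoc\<close>)

lemma ginv_idem: "e \<in> S \<Longrightarrow> e * e = e \<Longrightarrow> ginv e = e"
  by (rule ginv_eqI) (auto simp: mult.assoc[symmetric])

lemma ginv_ginv: "x \<in> S \<Longrightarrow> ginv (ginv x) = x"
  by (rule ginv_eqI) (auto simp: ginv_mem mult_ginv_mult ginv_mult_ginv)

text \<open>The inverse x of e f is also inverted by f x e, so x = f x e; this makes x idempotent,
  hence self-inverse, hence equal to e f.\<close>

lemma idem_mult_idem:
  assumes e: "e \<in> S" "e * e = e" and f: "f \<in> S" "f * f = f"
  shows "(e * f) * (e * f) = e * f"
proof -
  have ee: "\<And>z. e * (e * z) = e * z" and ff: "\<And>z. f * (f * z) = f * z"
    by (metis mult.assoc e(2)) (metis mult.assoc f(2))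
  define a where "a = e * f"
  define x where "x = ginv a"
  have aS: "a \<in> S" using a_def e f mult_mem by auto
  have xS: "x \<in> S" using x_def aS ginv_mem by auto
  have axa: "x * (a * x) = x" using ginv_mult_ginv[OF aS] x_def by simp
  have "ginv a = f * (x * e)"
  proof (rule ginv_eqI[OF aS])
    show "f * (x * e) \<in> S" using mult_mem e f xS by auto
    show "a * (f * (x * e) * a) = a"
      by (simp add: a_def mult.assoc ee ff f(2)) (metis a_def aS mult_ginv_mult mult.assoc x_def)
    have "f * (x * e) * (a * (f * (x * e))) = f * ((x * (a * x)) * e)"
      by (simp add: a_def mult.assoc ee ff e(2))
    then show "f * (x * e) * (a * (f * (x * e))) = f * (x * e)"
      by (simp add: axa mult.assoc)
  qed
  then have xx: "x * x = x"
    using x_def axa a_def by (metis mult.assoc)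
  have "x = a"
    using ginv_idem[OF xS xx] ginv_ginv[OF aS] x_def by simp
  then show ?thesis using xx a_def by simp
qed

lemma idem_commute:
  assumes e: "e \<in> S" "e * e = e" and f: "f \<in> S" "f * f = f"
  shows "e * f = f * e"
proof -
  have ef: "(e * f) * (e * f) = e * f" and fe: "(f * e) * (f * e) = f * e"
    using idem_mult_idem e f by blast+
  have efS: "e * f \<in> S" and feS: "f * e \<in> S" using mult_mem e f by auto
  have "ginv (e * f) = f * e"
  proof (rule ginv_eqI[OF efS feS])
    show "e * f * (f * e * (e * f)) = e * f"
      using ef e f by (simp add: mult.assoc) (metis mult.assoc)
    show "f * e * (e * f * (f * e)) = f * e"
      using fe e f by (simp add: mult.assoc) (metis mult.assoc)
  qed
  then show ?thesis using ginv_idem[OF efS ef] by simp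
qed

lemma mem_idems_iff: "e \<in> idems S (*) \<longleftrightarrow> e \<in> S \<and> e * e = e"
  by (simp add: idems_def)

lemma idems_commute: "e \<in> idems S (*) \<Longrightarrow> f \<in> idems S (*) \<Longrightarrow> e * f = f * e"
  using idem_commute mem_idems_iff by blast

lemma idems_mult_mem: "e \<in> idems S (*) \<Longrightarrow> f \<in> idems S (*) \<Longrightarrow> e * f \<in> idems S (*)"
  using idem_mult_idem mult_mem mem_idems_iff by metis

lemma ginv_mult_self_mem_idems: "x \<in> S \<Longrightarrow> ginv x * x \<in> idems S (*)"
  unfolding mem_idems_iff by (metis ginv_mem mult_mem ginv_mult_ginv mult.assoc)

lemma mult_ginv_self_mem_idems: "x \<in> S \<Longrightarrow> x * ginv x \<in> idems S (*)"
  unfolding mem_idems_iff by (metis ginv_mem mult_mem mult_ginv_mult mult.assoc)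

lemma ginv_mult:
  assumes x: "x \<in> S" and y: "y \<in> S"
  shows "ginv (x * y) = ginv y * ginv x"
proof (rule ginv_eqI)
  show "x * y \<in> S" "ginv y * ginv x \<in> S" using x y mult_mem ginv_mem by auto
  have c: "(y * ginv y) * (ginv x * x) = (ginv x * x) * (y * ginv y)"
    using idems_commute[OF mult_ginv_self_mem_idems[OF y] ginv_mult_self_mem_idems[OF x]] .
  have "x * y * (ginv y * ginv x * (x * y)) = x * ((y * ginv y) * (ginv x * x)) * y"
    by (simp add: mult.assoc)
  also have "\<dots> = x * y"
    using x y c by (simp add: mult.assoc mult_ginv_mult_left mult_ginv_mult)
  finally show "x * y * (ginv y * ginv x * (x * y)) = x * y" .
  have "ginv y * ginv x * (x * y * (ginv y * ginv x)) = ginv y * ((ginv x * x) * (y * ginv y)) * ginv x"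
    by (simp add: mult.assoc)
  also have "\<dots> = ginv y * ginv x"
    using x y c[symmetric] by (simp add: mult.assoc ginv_mult_ginv_left ginv_mult_ginv)
  finally show "ginv y * ginv x * (x * y * (ginv y * ginv x)) = ginv y * ginv x" .
qed

lemma conj_mem_idems:
  assumes x: "x \<in> S" and e: "e \<in> idems S (*)"
  shows "x * e * ginv x \<in> idems S (*)"
proof -
  have eS: "e \<in> S" "e * e = e" using e mem_idems_iff by auto
  have c: "e * (ginv x * x) = (ginv x * x) * e"
    using idems_commute[OF e ginv_mult_self_mem_idems[OF x]] .
  have "(x * e * ginv x) * (x * e * ginv x) = x * (e * (ginv x * x)) * e * ginv x"
    by (simp add: mult.assoc)
  also have "\<dots> = x * e * ginv x"
    using c x eS by (simp add: mult.assoc mult_ginv_mult_left)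
  finally show ?thesis
    unfolding mem_idems_iff using x eS mult_mem ginv_mem by auto
qed

lemma ginv_conj_mem_idems: "x \<in> S \<Longrightarrow> e \<in> idems S (*) \<Longrightarrow> ginv x * e * x \<in> idems S (*)"
  using conj_mem_idems[of "ginv x" e] ginv_ginv ginv_mem by auto

lemma natle_idems_iff:
  assumes "a \<in> idems S (*)" "b \<in> idems S (*)"
  shows "natle S (*) a b \<longleftrightarrow> a = b * a"
proof
  assume "natle S (*) a b"
  then obtain g where "g \<in> idems S (*)" "a = b * g" unfolding natle_def by blast
  then show "a = b * a" using assms mem_idems_iff by (metis mult.assoc)
qed (use assms in \<open>auto simp: natle_def\<close>)

lemma natle_iff:
  assumes x: "x \<in> S" and w: "w \<in> S"
  shows "natle S (*) x w \<longleftrightarrow> x = w * (ginv x * x)"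
proof
  assume "natle S (*) x w"
  then obtain e where e: "e \<in> idems S (*)" "x = w * e" unfolding natle_def by blast
  have eS: "e \<in> S" "e * e = e" using e mem_idems_iff by auto
  have "ginv x = e * ginv w" using e(2) ginv_mult[OF w eS(1)] ginv_idem eS by simp
  then have "ginv x * x = e * (ginv w * w) * e" using e(2) by (simp add: mult.assoc)
  also have "\<dots> = (ginv w * w) * e"
    using idems_commute[OF e(1) ginv_mult_self_mem_idems[OF w]] eS by (simp add: mult.assoc)
  finally show "x = w * (ginv x * x)"
    using e(2) w by (simp add: mult.assoc mult_ginv_mult_left)
qed (use x ginv_mult_self_mem_idems in \<open>auto simp: natle_def\<close>)

lemma natle_antisym:
  assumes x: "x \<in> S" and y: "y \<in> S"
    and xy: "natle S (*) x y" and yx: "natle S (*) y x"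
  shows "x = y"
proof -
  have dom_le: "ginv a * a = (ginv b * b) * (ginv a * a)"
    if a: "a \<in> S" and b: "b \<in> S" and ab: "natle S (*) a b" for a b
  proof -
    have da: "ginv a * a \<in> idems S (*)" and db: "ginv b * b \<in> idems S (*)"
      using a b ginv_mult_self_mem_idems by auto
    have ba: "b * (ginv a * a) = a" using natle_iff a b ab by simp
    then have ia: "ginv a = (ginv a * a) * ginv b"
      using ginv_mult[OF b, of "ginv a * a"] ginv_idem da mem_idems_iff by auto
    have "ginv a * a = ((ginv a * a) * ginv b) * (b * (ginv a * a))" using ia ba by simp
    also have "\<dots> = (ginv a * a) * (ginv b * b) * (ginv a * a)" by (simp add: mult.assoc)
    also have "\<dots> = (ginv b * b) * (ginv a * a)"
      using idems_commute[OF da db] da mem_idems_iff by (simp add: mult.assoc)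
    finally show ?thesis .
  qed
  have "ginv x * x = ginv y * y"
    using dom_le[OF x y xy] dom_le[OF y x yx]
      idems_commute[OF ginv_mult_self_mem_idems[OF x] ginv_mult_self_mem_idems[OF y]] by simp
  then show ?thesis
    using natle_iff[OF x y] xy mult_ginv_mult[OF y] by simp
qed

lemma is_lub_in_unique:
  "A \<subseteq> S \<Longrightarrow> is_lub_in S (*) A s t j \<Longrightarrow> is_lub_in S (*) A s t j' \<Longrightarrow> j = j'"
  unfolding is_lub_in_def using natle_antisym by blast

lemma is_glb_in_unique:
  "A \<subseteq> S \<Longrightarrow> is_glb_in S (*) A s t j \<Longrightarrow> is_glb_in S (*) A s t j' \<Longrightarrow> j = j'"
  unfolding is_glb_in_def using natle_antisym by blast

lemma idems_glb:
  assumes e: "e \<in> idems S (*)" and f: "f \<in> idems S (*)"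
  shows "is_glb_in S (*) (idems S (*)) e f (e * f)"
proof -
  have ef: "e * f \<in> idems S (*)" using idems_mult_mem e f by blast
  have "natle S (*) (e * f) e" "natle S (*) (e * f) f"
    using e f ef idems_commute[OF e f] natle_idems_iff mem_idems_iff by (metis mult.assoc)+
  moreover have "natle S (*) w (e * f)"
    if w: "w \<in> idems S (*)" "natle S (*) w e" "natle S (*) w f" for w
    using natle_idems_iff[OF w(1) e] natle_idems_iff[OF w(1) f] natle_idems_iff[OF w(1) ef] w
    by (metis mult.assoc)
  ultimately show ?thesis unfolding is_glb_in_def using ef by blast
qed

lemma compatible_mem_idems:
  assumes "compatible S (*) s t"
  shows "s * ginv t \<in> idems S (*)" "ginv s * t \<in> idems S (*)"
  using assms unfolding compatible_def by auto

lemma compatible_commute: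
  assumes s: "s \<in> S" and t: "t \<in> S" and c: "compatible S (*) s t"
  shows "t * ginv s = s * ginv t"
proof -
  have "ginv (s * ginv t) = t * ginv s"
    using ginv_mult[OF s ginv_mem[OF t]] ginv_ginv[OF t] by simp
  then show ?thesis
    using ginv_idem compatible_mem_idems[OF c] mem_idems_iff by auto
qed

lemma compatible_mult_dom:
  assumes s: "s \<in> S" and t: "t \<in> S" and c: "compatible S (*) s t"
  shows "s * (ginv t * t) = t * (ginv s * s)"
proof -
  have q: "s * ginv t \<in> idems S (*)" using compatible_mem_idems[OF c] by simp
  have ts: "t * ginv s = s * ginv t" using compatible_commute[OF s t c] .
  have "s * (ginv t * t) = s * ((ginv s * s) * (ginv t * t))"
    using mult_ginv_mult[OF s] by (metis mult.assoc)
  also have "\<dots> = s * ((ginv t * t) * (ginv s * s))"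
    using idems_commute[OF ginv_mult_self_mem_idems[OF s] ginv_mult_self_mem_idems[OF t]] by simp
  also have "\<dots> = (s * ginv t) * (s * ginv t) * s"
    by (metis ts mult.assoc)
  also have "\<dots> = (t * ginv s) * s"
    using ts q mem_idems_iff by simp
  finally show ?thesis by (simp add: mult.assoc)
qed

lemma mult_idem_mult_ginv_mem_idems:
  assumes s: "s \<in> S" and t: "t \<in> S" and q: "s * ginv t \<in> idems S (*)"
    and e: "e \<in> idems S (*)"
  shows "s * e * ginv t \<in> idems S (*)"
proof -
  have "ginv t * (t * e * ginv t) = (ginv t * t) * e * ginv t" by (simp add: mult.assoc)
  also have "\<dots> = e * ginv t"
    using idems_commute[OF ginv_mult_self_mem_idems[OF t] e] ginv_mult_ginv[OF t]
    by (simp add: mult.assoc)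
  finally have "s * e * ginv t = (s * ginv t) * (t * e * ginv t)" by (simp add: mult.assoc)
  then show ?thesis using idems_mult_mem[OF q conj_mem_idems[OF t e]] by simp
qed

lemma ginv_mult_idem_mult_mem_idems:
  assumes s: "s \<in> S" and t: "t \<in> S" and q: "ginv s * t \<in> idems S (*)"
    and e: "e \<in> idems S (*)"
  shows "ginv s * e * t \<in> idems S (*)"
  using mult_idem_mult_ginv_mem_idems[OF ginv_mem[OF s] ginv_mem[OF t] _ e] q ginv_ginv[OF t]
  by simp

lemma compatible_mult_left:
  assumes a: "a \<in> S" and s: "s \<in> S" and t: "t \<in> S" and c: "compatible S (*) s t"
  shows "compatible S (*) (a * s) (a * t)"
proof -
  have "ginv (a * s) * (a * t) = ginv s * (ginv a * a) * t"
    and "(a * s) * ginv (a * t) = a * (s * ginv t) * ginv a"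
    using ginv_mult[OF a s] ginv_mult[OF a t] by (simp_all add: mult.assoc)
  then show ?thesis
    unfolding compatible_def
    using ginv_mult_idem_mult_mem_idems[OF s t _ ginv_mult_self_mem_idems[OF a]]
      conj_mem_idems[OF a] compatible_mem_idems[OF c] by simp
qed

lemma compatible_mult_right:
  assumes a: "a \<in> S" and s: "s \<in> S" and t: "t \<in> S" and c: "compatible S (*) s t"
  shows "compatible S (*) (s * a) (t * a)"
proof -
  have "ginv (s * a) * (t * a) = ginv a * (ginv s * t) * a"
    and "(s * a) * ginv (t * a) = s * (a * ginv a) * ginv t"
    using ginv_mult[OF s a] ginv_mult[OF t a] by (simp_all add: mult.assoc)
  then show ?thesis
    unfolding compatible_def
    using mult_idem_mult_ginv_mem_idems[OF s t _ mult_ginv_self_mem_idems[OF a]]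
      ginv_conj_mem_idems[OF a] compatible_mem_idems[OF c] by simp
qed

lemma idems_compatible: "e \<in> idems S (*) \<Longrightarrow> f \<in> idems S (*) \<Longrightarrow> compatible S (*) e f"
  unfolding compatible_def using ginv_idem idems_mult_mem mem_idems_iff by auto

end

locale ring_inverse_submonoid = inverse_submonoid S for S :: "'a::ring_1 set" +
  assumes orthogonal_add_mem: "a \<in> S \<Longrightarrow> b \<in> S \<Longrightarrow> orthogonal S (*) 0 a b \<Longrightarrow> a + b \<in> S"
    and one_minus_idem_mem: "e \<in> S \<Longrightarrow> e * e = e \<Longrightarrow> 1 - e \<in> S"
begin

lemma one_minus_mem_idems: "e \<in> idems S (*) \<Longrightarrow> 1 - e \<in> idems S (*)"
  using one_minus_idem_mem mem_idems_iff by (auto simp: algebra_simps)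

lemma compatible_join_mem:
  assumes s: "s \<in> S" and t: "t \<in> S" and c: "compatible S (*) s t"
  shows "s + t - s * (ginv t * t) \<in> S"
proof -
  define ds where "ds = ginv s * s"
  have ds: "ds \<in> idems S (*)" using ginv_mult_self_mem_idems[OF s] ds_def by simp
  have cds: "1 - ds \<in> idems S (*)" using one_minus_mem_idems[OF ds] .
  have sds: "s * ds = s" using mult_ginv_mult[OF s] ds_def by (simp add: mult.assoc)
  have "(ginv s * t) * ds = ginv s * t"
    using idems_commute[OF ds compatible_mem_idems(2)[OF c]] ginv_mult_ginv_left[OF s] ds_def
    by (simp add: mult.assoc)
  then have "ginv s * (t * (1 - ds)) = 0" by (simp add: algebra_simps mult.assoc)
  moreover have "ginv (t * (1 - ds)) = (1 - ds) * ginv t"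
    using ginv_mult[OF t] cds ginv_idem mem_idems_iff by auto
  moreover have "s * ((1 - ds) * ginv t) = 0"
    using sds by (simp add: algebra_simps mult.assoc[symmetric])
  ultimately have "orthogonal S (*) 0 s (t * (1 - ds))"
    unfolding orthogonal_def by simp
  then have "s + t * (1 - ds) \<in> S"
    using orthogonal_add_mem s mult_mem[OF t] cds mem_idems_iff by blast
  then show ?thesis
    using compatible_mult_dom[OF s t c] ds_def by (simp add: algebra_simps)
qed

lemma idems_join_mem:
  assumes e: "e \<in> idems S (*)" and f: "f \<in> idems S (*)"
  shows "e + f - e * f \<in> idems S (*)"
proof -
  have e2: "e * e = e" and f2: "f * f = f" and fe: "f * e = e * f"
    using e f mem_idems_iff idems_commute by auto
  have "e + f - e * f \<in> S"
    using compatible_join_mem[of e f] idems_compatible[OF e f] e f ginv_idem mem_idems_iff by auto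
  moreover have "e * (e * f) = e * f" "f * (e * f) = e * f"
    using e2 f2 fe by (metis mult.assoc)+
  then have "(e + f - e * f) * (e + f - e * f) = e + f - e * f"
    using e2 f2 fe by (simp add: algebra_simps)
  ultimately show ?thesis using mem_idems_iff by blast
qed

lemma compatible_is_lub:
  assumes s: "s \<in> S" and t: "t \<in> S" and c: "compatible S (*) s t"
  shows "is_lub_in S (*) S s t (s + t - s * (ginv t * t))"
proof -
  define ds where "ds = ginv s * s"
  define dt where "dt = ginv t * t"
  have ds: "ds \<in> idems S (*)" and dt: "dt \<in> idems S (*)"
    using ginv_mult_self_mem_idems s t ds_def dt_def by auto
  have key: "s * dt = t * ds" using compatible_mult_dom[OF s t c] ds_def dt_def by simp
  have sds: "s * ds = s" and tdt: "t * dt = t"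
    using mult_ginv_mult[OF s] mult_ginv_mult[OF t] ds_def dt_def by (simp_all add: mult.assoc)
  have "(s + t - s * dt) * ds = s"
    using key sds ds mem_idems_iff by (simp add: algebra_simps mult.assoc)
  then have le_s: "natle S (*) s (s + t - s * dt)" unfolding natle_def using ds by metis
  have "(s + t - s * dt) * dt = t"
    using tdt dt mem_idems_iff by (simp add: algebra_simps mult.assoc)
  then have le_t: "natle S (*) t (s + t - s * dt)" unfolding natle_def using dt by metis
  have least: "natle S (*) (s + t - s * dt) w"
    if w: "w \<in> S" "natle S (*) s w" "natle S (*) t w" for w
  proof -
    have "w * ds = s" "w * dt = t"
      using natle_iff[OF s w(1)] natle_iff[OF t w(1)] w(2,3) ds_def dt_def by simp_all
    then have "s + t - s * dt = w * (ds + dt - ds * dt)"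
      by (simp add: algebra_simps mult.assoc[symmetric])
    moreover have "ds + dt - ds * dt \<in> idems S (*)"
      using idems_join_mem[OF ds dt] .
    ultimately show ?thesis unfolding natle_def by blast
  qed
  show ?thesis
    unfolding is_lub_in_def using le_s le_t least compatible_join_mem[OF s t c] dt_def by simp
qed

lemma compatible_is_lub_mult:
  assumes a: "a \<in> S" and s: "s \<in> S" and t: "t \<in> S" and c: "compatible S (*) s t"
    and j: "is_lub_in S (*) S s t j"
  shows "is_lub_in S (*) S (a * s) (a * t) (a * j)" "is_lub_in S (*) S (s * a) (t * a) (j * a)"
proof -
  have jj: "j = s + t - s * (ginv t * t)"
    using is_lub_in_unique[OF _ j compatible_is_lub[OF s t c]] by simp
  have q: "s * ginv t \<in> idems S (*)" using compatible_mem_idems[OF c] by simp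
  have "a * s * (ginv (a * t) * (a * t)) = a * ((s * ginv t) * (ginv a * a)) * t"
    using ginv_mult[OF a t] by (simp add: mult.assoc)
  also have "\<dots> = a * (ginv a * a) * (s * ginv t) * t"
    using idems_commute[OF q ginv_mult_self_mem_idems[OF a]] by (simp add: mult.assoc)
  finally have "a * s * (ginv (a * t) * (a * t)) = a * (s * (ginv t * t))"
    using mult_ginv_mult[OF a] by (simp add: mult.assoc)
  then have "a * j = a * s + a * t - a * s * (ginv (a * t) * (a * t))"
    unfolding jj by (simp add: algebra_simps)
  then show "is_lub_in S (*) S (a * s) (a * t) (a * j)"
    using compatible_is_lub[OF mult_mem[OF a s] mult_mem[OF a t] compatible_mult_left[OF a s t c]]
    by simp
  have "s * a * (ginv (t * a) * (t * a)) = s * ((a * ginv a) * (ginv t * t)) * a"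
    using ginv_mult[OF t a] by (simp add: mult.assoc)
  also have "\<dots> = s * (ginv t * t) * (a * ginv a) * a"
    using idems_commute[OF mult_ginv_self_mem_idems[OF a] ginv_mult_self_mem_idems[OF t]]
    by (simp add: mult.assoc)
  finally have "s * a * (ginv (t * a) * (t * a)) = s * (ginv t * t) * a"
    using mult_ginv_mult[OF a] by (simp add: mult.assoc)
  then have "j * a = s * a + t * a - s * a * (ginv (t * a) * (t * a))"
    unfolding jj by (simp add: algebra_simps)
  then show "is_lub_in S (*) S (s * a) (t * a) (j * a)"
    using compatible_is_lub[OF mult_mem[OF s a] mult_mem[OF t a] compatible_mult_right[OF a s t c]]
    by simp
qed

lemma idems_lub:
  assumes e: "e \<in> idems S (*)" and f: "f \<in> idems S (*)"
  shows "is_lub_in S (*) (idems S (*)) e f (e + f - e * f)"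
proof (rule is_lub_in_subset[OF _ idems_join_mem[OF e f]])
  show "idems S (*) \<subseteq> S" by (auto simp: idems_def)
  show "is_lub_in S (*) S e f (e + f - e * f)"
    using compatible_is_lub[OF _ _ idems_compatible[OF e f]] e f ginv_idem mem_idems_iff
    by (auto simp: mult.assoc)
qed

lemma idems_distrib:
  assumes e: "e \<in> idems S (*)" and f: "f \<in> idems S (*)"
  shows "e * (f + g - f * g) = e * f + e * g - (e * f) * (e * g)"
proof -
  have "(e * f) * (e * g) = e * (f * g)"
    using e f mem_idems_iff idems_commute by (metis mult.assoc)
  then show ?thesis by (simp add: algebra_simps)
qed

lemma idems_boolean: "idems_boolean S (*) 0"
proof -
  let ?E = "idems S (*)"
  have ES: "?E \<subseteq> S" by (auto simp: idems_def)
  have lattice: "\<forall>e\<in>?E. \<forall>f\<in>?E. (\<exists>j. is_lub_in S (*) ?E e f j) \<and> (\<exists>k. is_glb_in S (*) ?E e f k)"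
    using idems_lub idems_glb by blast
  have distributive: "is_lub_in S (*) ?E k l d"
    if e: "e \<in> ?E" and f: "f \<in> ?E" and g: "g \<in> ?E"
      and h: "is_lub_in S (*) ?E f g j" "is_glb_in S (*) ?E e j d"
        "is_glb_in S (*) ?E e f k" "is_glb_in S (*) ?E e g l"
    for e f g j d k l
  proof -
    have j: "j = f + g - f * g" using is_lub_in_unique[OF ES h(1) idems_lub[OF f g]] .
    have "d = e * j" "k = e * f" "l = e * g"
      using is_glb_in_unique[OF ES h(2) idems_glb[OF e]] idems_join_mem[OF f g] j
        is_glb_in_unique[OF ES h(3) idems_glb[OF e f]]
        is_glb_in_unique[OF ES h(4) idems_glb[OF e g]] by auto
    then show ?thesis
      using idems_lub idems_mult_mem e f g idems_distrib j by simp
  qed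
  have zero: "0 \<in> ?E" using zero_mem mem_idems_iff by simp
  have complement: "\<exists>g\<in>?E. natle S (*) g e \<and> is_glb_in S (*) ?E f g 0 \<and> is_lub_in S (*) ?E f g e"
    if e: "e \<in> ?E" and f: "f \<in> ?E" and fe: "natle S (*) f e" for e f
  proof -
    have ef: "e * f = f" using natle_idems_iff e f fe by simp
    have e2: "e * e = e" and f2: "f * f = f" and fe': "f * e = e * f"
      using e f mem_idems_iff idems_commute by auto
    have "e * (1 - f) \<in> ?E" using idems_mult_mem one_minus_mem_idems e f by blast
    then have g: "e - f \<in> ?E" using ef by (simp add: algebra_simps)
    have "natle S (*) (e - f) e" using natle_idems_iff[OF g e] e2 ef by (simp add: algebra_simps)
    moreover have "f * (e - f) = 0" using fe' ef f2 by (simp add: algebra_simps)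
    then have "is_glb_in S (*) ?E f (e - f) 0" "is_lub_in S (*) ?E f (e - f) e"
      using idems_glb[OF f g] idems_lub[OF f g] by simp_all
    ultimately show ?thesis using g by blast
  qed
  have bottom: "\<forall>e\<in>?E. natle S (*) 0 e" using natle_idems_iff zero by simp
  show ?thesis
    unfolding idems_boolean_def Let_def
    using lattice distributive zero bottom complement by blast
qed

lemma boolean_inverse_monoid: "boolean_inverse_monoid S (*) 1 0"
  unfolding boolean_inverse_monoid_def
proof (intro conjI ballI allI impI)
  show "\<exists>j. is_lub_in S (*) S s t j" if "s \<in> S" "t \<in> S" "compatible S (*) s t" for s t
    using compatible_is_lub that by blast
qed (use inverse_monoid_zero compatible_is_lub_mult idems_boolean in auto)

end

theorem lemma3p1:
  fixes S :: "'a::ring_1 set"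
  assumes "inverse_monoid_zero S (*) 1 0"
    and "\<forall>a\<in>S. \<forall>b\<in>S. orthogonal S (*) 0 a b \<longrightarrow> a + b \<in> S"
    and "\<forall>e\<in>S. e * e = e \<longrightarrow> 1 - e \<in> S"
  shows "boolean_inverse_monoid S (*) 1 0"
proof -
  interpret ring_inverse_submonoid S
    by unfold_locales (use assms in auto)
  show ?thesis by (rule boolean_inverse_monoid)
qed

end
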